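(* Let $G$ be a nontrivial finite group, $1\ne g\in G$, and $S=\mathscr M(G,2,2,C)$ with $C=\begin{bmatrix}1&1\\1&g\end{bmatrix}$. Then both the minimal degree of a faithful action of $S$ by partial transformations and by total transformations equal $\min\{2\deg(\rho)-|\mathrm{Fix}(\rho(g))|\}$, as $\rho$ runs over all faithful permutation representations of $G$ (equivalently, all faithful permutation representations with no two isomorphic orbits).
   Context: The Rees matrix semigroup $\mathscr M(G,2,2,C)$ is $\{1,2\}\times G\times\{1,2\}$ with $(i,h,j)(k,h',l)=(i,hC_{jk}h',l)$. The minimal degree of a faithful action by partial (resp. total) transformations is the least $m$ such that $S$ embeds in the monoid of partial (resp. total) maps of an $m$-set acting on the right. $\deg(\rho)$ is the number of points permuted and $\mathrm{Fix}(\rho(g))$ the set of fixed points of $\rho(g)$. *)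

theory Defs
  imports "HOL-Algebra.Bij"
begin

definition rees_carrier :: "('g, 'b) monoid_scheme \<Rightarrow> (nat \<times> 'g \<times> nat) set" where
  "rees_carrier G = {1,2} \<times> carrier G \<times> {1,2}"

definition rees_mult ::
  "('g, 'b) monoid_scheme \<Rightarrow> (nat \<Rightarrow> nat \<Rightarrow> 'g) \<Rightarrow> nat \<times> 'g \<times> nat \<Rightarrow> nat \<times> 'g \<times> nat \<Rightarrow> nat \<times> 'g \<times> nat" where
  "rees_mult G C a b = (case a of (i, h, j) \<Rightarrow> case b of (k, h', l) \<Rightarrow>
      (i, h \<otimes>\<^bsub>G\<^esub> C j k \<otimes>\<^bsub>G\<^esub> h', l))"

definition sandwich_C :: "('g, 'b) monoid_scheme \<Rightarrow> 'g \<Rightarrow> nat \<Rightarrow> nat \<Rightarrow> 'g" where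
  "sandwich_C G g j k = (if j = 2 \<and> k = 2 then g else \<one>\<^bsub>G\<^esub>)"

text \<open>The m-set is {..<m}. A partial transformation is a map nat => nat option that
  is None outside {..<m} and has values in {..<m}. Maps act on the right, so the
  product s t acts as "first s, then t".\<close>

definition partial_faithful_action ::
  "'s set \<Rightarrow> ('s \<Rightarrow> 's \<Rightarrow> 's) \<Rightarrow> nat \<Rightarrow> bool" where
  "partial_faithful_action S mul m \<longleftrightarrow>
    (\<exists>\<phi> :: 's \<Rightarrow> nat \<Rightarrow> nat option.
       inj_on \<phi> S \<and>
       (\<forall>s\<in>S. \<forall>x. (x < m \<longrightarrow> (\<forall>y. \<phi> s x = Some y \<longrightarrow> y < m)) \<and>
                   (m \<le> x \<longrightarrow> \<phi> s x = None)) \<and>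
       (\<forall>s\<in>S. \<forall>t\<in>S. \<phi> (mul s t) = (\<lambda>x. Option.bind (\<phi> s x) (\<phi> t))))"

definition total_faithful_action ::
  "'s set \<Rightarrow> ('s \<Rightarrow> 's \<Rightarrow> 's) \<Rightarrow> nat \<Rightarrow> bool" where
  "total_faithful_action S mul m \<longleftrightarrow>
    (\<exists>\<phi> :: 's \<Rightarrow> nat \<Rightarrow> nat.
       inj_on \<phi> S \<and>
       (\<forall>s\<in>S. \<forall>x. (x < m \<longrightarrow> \<phi> s x < m) \<and> (m \<le> x \<longrightarrow> \<phi> s x = x)) \<and>
       (\<forall>s\<in>S. \<forall>t\<in>S. \<phi> (mul s t) = \<phi> t \<circ> \<phi> s))"

definition min_partial_degree :: "'s set \<Rightarrow> ('s \<Rightarrow> 's \<Rightarrow> 's) \<Rightarrow> nat" where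
  "min_partial_degree S mul = (LEAST m. partial_faithful_action S mul m)"

definition min_total_degree :: "'s set \<Rightarrow> ('s \<Rightarrow> 's \<Rightarrow> 's) \<Rightarrow> nat" where
  "min_total_degree S mul = (LEAST m. total_faithful_action S mul m)"

text \<open>A permutation representation of degree n: a homomorphism into the
  symmetric group on {..<n} (every finite G-set is isomorphic to one of these).\<close>

definition faithful_perm_rep :: "('g, 'b) monoid_scheme \<Rightarrow> nat \<Rightarrow> ('g \<Rightarrow> nat \<Rightarrow> nat) \<Rightarrow> bool" where
  "faithful_perm_rep G n \<rho> \<longleftrightarrow> \<rho> \<in> hom G (BijGroup {..<n}) \<and> inj_on \<rho> (carrier G)"

definition Fix_perm :: "nat \<Rightarrow> (nat \<Rightarrow> nat) \<Rightarrow> nat set" where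
  "Fix_perm n p = {x \<in> {..<n}. p x = x}"

definition rep_orbit :: "('g, 'b) monoid_scheme \<Rightarrow> ('g \<Rightarrow> nat \<Rightarrow> nat) \<Rightarrow> nat \<Rightarrow> nat set" where
  "rep_orbit G \<rho> x = {\<rho> h x | h. h \<in> carrier G}"

definition iso_orbits :: "('g, 'b) monoid_scheme \<Rightarrow> ('g \<Rightarrow> nat \<Rightarrow> nat) \<Rightarrow> nat set \<Rightarrow> nat set \<Rightarrow> bool" where
  "iso_orbits G \<rho> O1 O2 \<longleftrightarrow> (\<exists>\<beta>. bij_betw \<beta> O1 O2 \<and>
      (\<forall>h\<in>carrier G. \<forall>x\<in>O1. \<beta> (\<rho> h x) = \<rho> h (\<beta> x)))"

definition no_iso_orbits :: "('g, 'b) monoid_scheme \<Rightarrow> nat \<Rightarrow> ('g \<Rightarrow> nat \<Rightarrow> nat) \<Rightarrow> bool" where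
  "no_iso_orbits G n \<rho> \<longleftrightarrow> (\<forall>x<n. \<forall>y<n. rep_orbit G \<rho> x \<noteq> rep_orbit G \<rho> y \<longrightarrow>
      \<not> iso_orbits G \<rho> (rep_orbit G \<rho> x) (rep_orbit G \<rho> y))"

end

theory Submission
  imports Defs "HOL-Algebra.Group_Action"
begin

text \<open>
  Given a faithful permutation representation \<open>X\<close> of \<open>G\<close>, the semigroup acts on the right of
  \<open>X \<times> {1} \<union> (X - Fix g) \<times> {2}\<close> by \<open>(y, j) \<cdot> (k, h, l) = (y \<cdot> C\<^sub>j\<^sub>k h, l)\<close>, a point \<open>(z, 2)\<close>
  with \<open>z \<cdot> g = z\<close> being replaced by \<open>(z, 1)\<close>. This is a faithful action by total maps on
  \<open>2 |X| - |Fix g|\<close> points.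

  Conversely, in a faithful action by partial maps on \<open>m\<close> points, the group \<open>{(1, h, 1)}\<close> acts
  faithfully on the fixed points \<open>A\<^sub>1\<close> of the idempotent \<open>(1, 1, 1)\<close>, the idempotent
  \<open>(1, 1, 2)\<close> maps \<open>A\<^sub>1\<close> injectively into its own fixed points \<open>A\<^sub>2\<close>, and \<open>g\<close> fixes
  \<open>A\<^sub>1 \<inter> A\<^sub>2\<close> pointwise because \<open>(1, 1, 2) (2, 1, 1) = (1, g, 1)\<close> while
  \<open>(1, 1, 1) (2, 1, 1) = (1, 1, 1)\<close>. Hence \<open>m \<ge> |A\<^sub>1 \<union> A\<^sub>2| \<ge> 2 |A\<^sub>1| - |Fix g|\<close>.

  Deleting one of two isomorphic orbits keeps a permutation representation faithful and does
  not increase \<open>2 deg - |Fix g|\<close>, so the minimum is also attained without isomorphic orbits.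
\<close>

lemma (in group_action) acting_group: "group G"
  using group_hom group_hom.axioms(1) by blast

lemma (in group_action) action_closed:
  "h \<in> carrier G \<Longrightarrow> x \<in> E \<Longrightarrow> \<phi> h x \<in> E"
  using element_image by blast

lemma (in group_action) action_one:
  "x \<in> E \<Longrightarrow> \<phi> \<one> x = x"
  using id_eq_one by (metis restrict_apply')

lemma (in faithful_action) faithful_eqI:
  assumes "h \<in> carrier G" "k \<in> carrier G" "\<And>x. x \<in> E \<Longrightarrow> \<phi> h x = \<phi> k x"
  shows "h = k"
proof -
  have "\<phi> h = \<phi> k"
    using assms bij_prop0 by (intro extensionalityI[OF Bij_imp_extensional Bij_imp_extensional])
  then show ?thesis
    using assms(1,2) faithful by (auto dest: inj_onD)
qed

lemma faithful_action_restrict: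
  fixes G (structure)
  assumes "group G"
    and closed: "\<And>h a. h \<in> carrier G \<Longrightarrow> a \<in> E \<Longrightarrow> act h a \<in> E"
    and mult: "\<And>h k a. h \<in> carrier G \<Longrightarrow> k \<in> carrier G \<Longrightarrow> a \<in> E \<Longrightarrow>
                 act (h \<otimes> k) a = act h (act k a)"
    and one: "\<And>a. a \<in> E \<Longrightarrow> act \<one> a = a"
    and faithful: "\<And>h k. h \<in> carrier G \<Longrightarrow> k \<in> carrier G \<Longrightarrow>
                     (\<And>a. a \<in> E \<Longrightarrow> act h a = act k a) \<Longrightarrow> h = k"
  shows "faithful_action G E (\<lambda>h. restrict (act h) E)"
proof -
  interpret group G by fact
  have Bij: "restrict (act h) E \<in> Bij E" if h: "h \<in> carrier G" for h
  proof -
    have "bij_betw (act h) E E"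
      by (rule bij_betw_byWitness[where f' = "act (inv h)"])
        (use h closed mult one in \<open>auto simp flip: mult\<close>)
    then show ?thesis
      by (simp add: Bij_def bij_betw_def inj_on_def)
  qed
  have "(\<lambda>h. restrict (act h) E) \<in> hom G (BijGroup E)"
  proof (rule homI)
    show "restrict (act h) E \<in> carrier (BijGroup E)" if "h \<in> carrier G" for h
      using Bij[OF that] by (simp add: BijGroup_def)
    show "restrict (act (h \<otimes> k)) E =
        restrict (act h) E \<otimes>\<^bsub>BijGroup E\<^esub> restrict (act k) E"
      if "h \<in> carrier G" "k \<in> carrier G" for h k
      using that Bij by (auto simp: BijGroup_def compose_def mult closed)
  qed
  moreover have "inj_on (\<lambda>h. restrict (act h) E) (carrier G)"
    by (rule inj_onI) (metis faithful restrict_apply')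
  ultimately show ?thesis
    using group_BijGroup
    by (simp add: faithful_action_def faithful_action_axioms_def group_action_def
        group_hom_def group_hom_axioms_def is_group)
qed

definition transport_action :: "('i \<Rightarrow> 'a) \<Rightarrow> 'i set \<Rightarrow> ('g \<Rightarrow> 'a \<Rightarrow> 'a) \<Rightarrow> 'g \<Rightarrow> 'i \<Rightarrow> 'i" where
  "transport_action e F \<phi> = (\<lambda>h. restrict (\<lambda>i. inv_into F e (\<phi> h (e i))) F)"

lemma (in faithful_action) faithful_action_transport:
  assumes e: "bij_betw e F E"
  shows "faithful_action G F (transport_action e F \<phi>)"
proof -
  let ?d = "inv_into F e"
  have d_F: "?d a \<in> F" if "a \<in> E" for a
    using bij_betwE[OF bij_betw_inv_into[OF e]] that by blast
  have e_E: "e i \<in> E" if "i \<in> F" for i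
    using bij_betwE[OF e] that by blast
  have ed: "e (?d a) = a" if "a \<in> E" for a
    using e that by (simp add: bij_betw_inv_into_right)
  have de: "?d (e i) = i" if "i \<in> F" for i
    using e that by (simp add: bij_betw_inv_into_left)
  show ?thesis
    unfolding transport_action_def
  proof (rule faithful_action_restrict[OF acting_group])
    show "?d (\<phi> h (e i)) \<in> F" if "h \<in> carrier G" "i \<in> F" for h i
      using that by (simp add: d_F e_E action_closed)
    show "?d (\<phi> (h \<otimes> k) (e i)) = ?d (\<phi> h (e (?d (\<phi> k (e i)))))"
      if "h \<in> carrier G" "k \<in> carrier G" "i \<in> F" for h k i
      using that by (simp add: composition_rule e_E ed action_closed)
    show "?d (\<phi> \<one> (e i)) = i" if "i \<in> F" for i
      using that by (simp add: action_one e_E de)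
    show "h = k" if hk: "h \<in> carrier G" "k \<in> carrier G"
      and agree: "\<And>i. i \<in> F \<Longrightarrow> ?d (\<phi> h (e i)) = ?d (\<phi> k (e i))" for h k
    proof (rule faithful_eqI[OF hk])
      fix a assume "a \<in> E"
      then obtain i where "i \<in> F" "a = e i"
        using e by (auto simp: bij_betw_def)
      then show "\<phi> h a = \<phi> k a"
        using agree[of i] ed action_closed[OF hk(1)] action_closed[OF hk(2)] e_E by metis
    qed
  qed
qed

lemma (in group_action) card_invariants_transport:
  assumes e: "bij_betw e F E" and h: "h \<in> carrier G"
  shows "card (invariants F (transport_action e F \<phi>) h) = card (invariants E \<phi> h)"
proof -
  let ?d = "inv_into F e"
  have "invariants F (transport_action e F \<phi>) h = {i \<in> F. e i \<in> invariants E \<phi> h}"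
  proof (intro equalityI subsetI)
    fix i assume "i \<in> invariants F (transport_action e F \<phi>) h"
    then have i: "i \<in> F" "?d (\<phi> h (e i)) = i"
      by (auto simp: invariants_def transport_action_def)
    then have "e i \<in> E" "\<phi> h (e i) \<in> E"
      using e h bij_betwE action_closed by blast+
    then have "\<phi> h (e i) = e i"
      using i(2) e by (metis bij_betw_inv_into_right)
    then show "i \<in> {i \<in> F. e i \<in> invariants E \<phi> h}"
      using i \<open>e i \<in> E\<close> by (simp add: invariants_def)
  next
    fix i assume "i \<in> {i \<in> F. e i \<in> invariants E \<phi> h}"
    then show "i \<in> invariants F (transport_action e F \<phi>) h"
      using e by (simp add: invariants_def transport_action_def bij_betw_inv_into_left)
  qed
  moreover have "e ` {i \<in> F. e i \<in> invariants E \<phi> h} = invariants E \<phi> h"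
    using e by (force simp: bij_betw_def invariants_def)
  moreover have "inj_on e {i \<in> F. e i \<in> invariants E \<phi> h}"
    using e by (auto simp: bij_betw_def inj_on_def)
  ultimately show ?thesis
    using card_image by fastforce
qed

lemma faithful_perm_rep_iff_faithful_action:
  assumes "group G"
  shows "faithful_perm_rep G n \<rho> \<longleftrightarrow> faithful_action G {..<n} \<rho>"
  using assms group_BijGroup
  by (auto simp: faithful_perm_rep_def faithful_action_def faithful_action_axioms_def
      group_action_def group_hom_def group_hom_axioms_def)

lemma Fix_perm_eq_invariants: "Fix_perm n (\<rho> h) = invariants {..<n} \<rho> h"
  by (simp add: Fix_perm_def invariants_def)

lemma (in faithful_action) obtain_faithful_perm_rep:
  assumes "finite E"
  obtains \<rho> where "faithful_perm_rep G (card E) \<rho>"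
    and "\<And>h. h \<in> carrier G \<Longrightarrow> card (Fix_perm (card E) (\<rho> h)) = card (invariants E \<phi> h)"
proof -
  obtain e where e: "bij_betw e {..<card E} E"
    using ex_bij_betw_nat_finite[OF assms] by (auto simp: atLeast0LessThan)
  show ?thesis
  proof (rule that)
    show "faithful_perm_rep G (card E) (transport_action e {..<card E} \<phi>)"
      using faithful_action_transport[OF e] faithful_perm_rep_iff_faithful_action[OF acting_group]
      by blast
    show "card (Fix_perm (card E) (transport_action e {..<card E} \<phi> h)) = card (invariants E \<phi> h)"
      if "h \<in> carrier G" for h
      using card_invariants_transport[OF e that] by (simp add: Fix_perm_eq_invariants)
  qed
qed

lemma ex_faithful_perm_rep:
  fixes G (structure)
  assumes "group G" "finite (carrier G)"
  shows "\<exists>n \<rho>. faithful_perm_rep G n \<rho>"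
proof -
  interpret group G by fact
  interpret faithful_action G "carrier G" "\<lambda>h. restrict ((\<otimes>) h) (carrier G)"
    by (rule faithful_action_restrict) (auto simp: m_assoc dest: bspec[of _ _ \<one>])
  show ?thesis
    using obtain_faithful_perm_rep assms(2) by metis
qed

section \<open>Deleting isomorphic orbits\<close>

lemma rep_orbit_eq_orbit: "rep_orbit G \<rho> = orbit G \<rho>"
  by (simp add: rep_orbit_def orbit_def fun_eq_iff)

lemma (in group_action) orbit_subset:
  "x \<in> E \<Longrightarrow> orbit G \<phi> x \<subseteq> E"
  using element_image by (auto simp: orbit_def)

lemma (in group_action) orbit_eq_orbit:
  assumes "x \<in> E" "y \<in> orbit G \<phi> x"
  shows "orbit G \<phi> y = orbit G \<phi> x"
proof -
  have "y \<in> E"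
    using assms orbit_subset by blast
  then show ?thesis
    using assms orbit_subset orbit_sym orbit_trans by blast
qed

lemma (in group_action) orbit_action:
  "h \<in> carrier G \<Longrightarrow> \<phi> h a \<in> orbit G \<phi> a"
  by (auto simp: orbit_def)

lemma (in group_action) orbits_disjoint:
  assumes "x \<in> E" "y \<in> E" "orbit G \<phi> x \<noteq> orbit G \<phi> y"
  shows "orbit G \<phi> x \<inter> orbit G \<phi> y = {}"
proof (rule ccontr)
  assume "orbit G \<phi> x \<inter> orbit G \<phi> y \<noteq> {}"
  then obtain z where "z \<in> orbit G \<phi> x" "z \<in> orbit G \<phi> y"
    by blast
  then show False
    using orbit_eq_orbit assms by metis
qed

lemma (in group_action) orbit_complement_closed:
  assumes x: "x \<in> E" and h: "h \<in> carrier G" and a: "a \<in> E - orbit G \<phi> x"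
  shows "\<phi> h a \<in> E - orbit G \<phi> x"
proof -
  have "\<phi> h a \<notin> orbit G \<phi> x"
  proof
    assume "\<phi> h a \<in> orbit G \<phi> x"
    then have "orbit G \<phi> a = orbit G \<phi> x"
      using orbit_eq_orbit[OF x] orbit_eq_orbit[of a "\<phi> h a"] a h orbit_action by force
    then show False
      using a orbit_refl by blast
  qed
  then show ?thesis
    using h a action_closed by blast
qed

lemma (in faithful_action) faithful_action_remove_orbit:
  assumes x: "x \<in> E" and y: "y \<in> E" and "orbit G \<phi> x \<noteq> orbit G \<phi> y"
    and \<beta>: "bij_betw \<beta> (orbit G \<phi> x) (orbit G \<phi> y)"
    and \<beta>_equivariant: "\<And>h a. h \<in> carrier G \<Longrightarrow> a \<in> orbit G \<phi> x \<Longrightarrow> \<beta> (\<phi> h a) = \<phi> h (\<beta> a)"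
  shows "faithful_action G (E - orbit G \<phi> x) (\<lambda>h. restrict (\<phi> h) (E - orbit G \<phi> x))"
proof (rule faithful_action_restrict[OF acting_group orbit_complement_closed[OF x]])
  show "\<phi> (h \<otimes> k) a = \<phi> h (\<phi> k a)"
    if "h \<in> carrier G" "k \<in> carrier G" "a \<in> E - orbit G \<phi> x" for h k a
    using that composition_rule by blast
  show "\<phi> \<one> a = a" if "a \<in> E - orbit G \<phi> x" for a
    using that action_one by blast
  show "h = k" if hk: "h \<in> carrier G" "k \<in> carrier G"
    and agree: "\<And>a. a \<in> E - orbit G \<phi> x \<Longrightarrow> \<phi> h a = \<phi> k a" for h k
  proof (rule faithful_eqI[OF hk])
    fix a assume a: "a \<in> E"
    show "\<phi> h a = \<phi> k a"
    proof (cases "a \<in> orbit G \<phi> x")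
      case False
      then show ?thesis
        using a agree by blast
    next
      case True
      \<comment> \<open>transport the agreement on the isomorphic orbit of \<open>y\<close> back along \<open>\<beta>\<close>\<close>
      have "\<beta> a \<in> E - orbit G \<phi> x"
        using True \<beta> orbit_subset[OF y] orbits_disjoint[OF assms(1-3)] bij_betwE by blast
      then have "\<beta> (\<phi> h a) = \<beta> (\<phi> k a)"
        using agree True hk \<beta>_equivariant by simp
      moreover have "\<phi> h a \<in> orbit G \<phi> x" "\<phi> k a \<in> orbit G \<phi> x"
        using True hk orbit_action orbit_eq_orbit[OF x] by metis+
      ultimately show ?thesis
        using \<beta> by (meson bij_betw_imp_inj_on inj_onD)
    qed
  qed
qed

lemma double_card_Diff_le:
  assumes "finite A" "F \<subseteq> A"
  shows "2 * card (A - B) - card (F - B) \<le> 2 * card A - card F"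
proof -
  have "finite F"
    using assms finite_subset by blast
  moreover have "card (F \<inter> B) \<le> card (A \<inter> B)" "card (A \<inter> B) \<le> card A" "card F \<le> card A"
    using assms by (auto intro: card_mono)
  ultimately show ?thesis
    using assms by (simp add: card_Diff_subset_Int)
qed

lemma faithful_perm_rep_delete_iso_orbit:
  assumes G: "group G" and g: "g \<in> carrier G" and \<rho>: "faithful_perm_rep G n \<rho>"
    and "\<not> no_iso_orbits G n \<rho>"
  shows "\<exists>n' \<rho>'. faithful_perm_rep G n' \<rho>' \<and> n' < n \<and>
           2 * n' - card (Fix_perm n' (\<rho>' g)) \<le> 2 * n - card (Fix_perm n (\<rho> g))"
proof -
  interpret faithful_action G "{..<n}" \<rho>
    using G \<rho> faithful_perm_rep_iff_faithful_action by blast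
  obtain x y where xy: "x < n" "y < n" "orbit G \<rho> x \<noteq> orbit G \<rho> y"
    and "iso_orbits G \<rho> (orbit G \<rho> x) (orbit G \<rho> y)"
    using assms(4) unfolding no_iso_orbits_def rep_orbit_eq_orbit by blast
  then obtain \<beta> where \<beta>: "bij_betw \<beta> (orbit G \<rho> x) (orbit G \<rho> y)"
    and \<beta>_equivariant: "\<And>h a. h \<in> carrier G \<Longrightarrow> a \<in> orbit G \<rho> x \<Longrightarrow> \<beta> (\<rho> h a) = \<rho> h (\<beta> a)"
    unfolding iso_orbits_def by blast
  define E' where "E' = {..<n} - orbit G \<rho> x"
  interpret E': faithful_action G E' "\<lambda>h. restrict (\<rho> h) E'"
    unfolding E'_def using xy
    by (intro faithful_action_remove_orbit[OF _ _ _ \<beta> \<beta>_equivariant]) auto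
  have "finite E'"
    by (simp add: E'_def)
  then obtain \<rho>' where \<rho>': "faithful_perm_rep G (card E') \<rho>'"
    and Fix': "card (Fix_perm (card E') (\<rho>' g)) = card (invariants E' (\<lambda>h. restrict (\<rho> h) E') g)"
    using E'.obtain_faithful_perm_rep g by blast
  have "x \<in> orbit G \<rho> x"
    using xy orbit_refl by blast
  then have "E' \<subset> {..<n}"
    using xy by (auto simp: E'_def)
  then have "card E' < n"
    using psubset_card_mono[of "{..<n}"] by simp
  moreover have "2 * card E' - card (Fix_perm (card E') (\<rho>' g)) \<le> 2 * n - card (Fix_perm n (\<rho> g))"
  proof -
    have "invariants E' (\<lambda>h. restrict (\<rho> h) E') g = Fix_perm n (\<rho> g) - orbit G \<rho> x"
      by (auto simp: invariants_def Fix_perm_def E'_def)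
    moreover have "Fix_perm n (\<rho> g) \<subseteq> {..<n}"
      by (auto simp: Fix_perm_def)
    ultimately show ?thesis
      using double_card_Diff_le[of "{..<n}" "Fix_perm n (\<rho> g)" "orbit G \<rho> x"]
      unfolding Fix' by (simp add: E'_def)
  qed
  ultimately show ?thesis
    using \<rho>' by blast
qed

lemma faithful_perm_rep_without_iso_orbits:
  assumes G: "group G" and g: "g \<in> carrier G" and \<rho>: "faithful_perm_rep G n \<rho>"
  shows "\<exists>n' \<rho>'. faithful_perm_rep G n' \<rho>' \<and> no_iso_orbits G n' \<rho>' \<and>
           2 * n' - card (Fix_perm n' (\<rho>' g)) \<le> 2 * n - card (Fix_perm n (\<rho> g))"
  using \<rho>
proof (induction n arbitrary: \<rho> rule: less_induct)
  case (less n \<rho>)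
  show ?case
  proof (cases "no_iso_orbits G n \<rho>")
    case True
    then show ?thesis
      using less.prems by blast
  next
    case False
    then obtain n' \<rho>' where "faithful_perm_rep G n' \<rho>'" "n' < n"
      and le: "2 * n' - card (Fix_perm n' (\<rho>' g)) \<le> 2 * n - card (Fix_perm n (\<rho> g))"
      using faithful_perm_rep_delete_iso_orbit[OF G g less.prems] by blast
    then show ?thesis
      using less.IH order.trans[OF _ le] by blast
  qed
qed

lemma total_faithful_action_card:
  fixes act :: "'s \<Rightarrow> 'p \<Rightarrow> 'p"
  assumes "finite P"
    and closed: "\<And>s p. s \<in> S \<Longrightarrow> p \<in> P \<Longrightarrow> act s p \<in> P"
    and mult: "\<And>s t p. s \<in> S \<Longrightarrow> t \<in> S \<Longrightarrow> p \<in> P \<Longrightarrow> act (mul s t) p = act t (act s p)"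
    and faithful: "\<And>s t. s \<in> S \<Longrightarrow> t \<in> S \<Longrightarrow> (\<And>p. p \<in> P \<Longrightarrow> act s p = act t p) \<Longrightarrow> s = t"
  shows "total_faithful_action S mul (card P)"
proof -
  define m where "m = card P"
  obtain e where e: "bij_betw e {..<m} P"
    using ex_bij_betw_nat_finite[OF \<open>finite P\<close>] by (auto simp: m_def atLeast0LessThan)
  define d where "d = inv_into {..<m} e"
  have d: "bij_betw d P {..<m}"
    using e by (simp add: d_def bij_betw_inv_into)
  have ed: "e (d p) = p" if "p \<in> P" for p
    using e that by (simp add: d_def bij_betw_inv_into_right)
  have e_P: "e i \<in> P" if "i < m" for i
    using e that bij_betwE by blast
  have d_lt: "d p < m" if "p \<in> P" for p
    using d that bij_betwE by blast
  define \<phi> where "\<phi> s x = (if x < m then d (act s (e x)) else x)" for s x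
  have "inj_on \<phi> S"
  proof (rule inj_onI)
    fix s t assume st: "s \<in> S" "t \<in> S" "\<phi> s = \<phi> t"
    show "s = t"
    proof (rule faithful[OF st(1,2)])
      fix p assume p: "p \<in> P"
      have "d (act s p) = d (act t p)"
        using fun_cong[OF st(3), of "d p"] p by (simp add: \<phi>_def d_lt ed)
      then show "act s p = act t p"
        using ed closed st p by metis
    qed
  qed
  moreover have "\<forall>s\<in>S. \<forall>x. (x < m \<longrightarrow> \<phi> s x < m) \<and> (m \<le> x \<longrightarrow> \<phi> s x = x)"
    by (auto simp: \<phi>_def d_lt closed e_P)
  moreover have "\<forall>s\<in>S. \<forall>t\<in>S. \<phi> (mul s t) = \<phi> t \<circ> \<phi> s"
    by (auto simp: \<phi>_def d_lt closed e_P mult ed)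
  ultimately show ?thesis
    unfolding total_faithful_action_def m_def by blast
qed

lemma partial_faithful_action_if_total:
  assumes "total_faithful_action S mul m"
  shows "partial_faithful_action S mul m"
proof -
  obtain \<phi> where inj: "inj_on \<phi> S"
    and range: "\<forall>s\<in>S. \<forall>x. (x < m \<longrightarrow> \<phi> s x < m) \<and> (m \<le> x \<longrightarrow> \<phi> s x = x)"
    and mult: "\<forall>s\<in>S. \<forall>t\<in>S. \<phi> (mul s t) = \<phi> t \<circ> \<phi> s"
    using assms unfolding total_faithful_action_def by blast
  define \<psi> where "\<psi> s x = (if x < m then Some (\<phi> s x) else None)" for s x
  have "inj_on \<psi> S"
  proof (rule inj_onI)
    fix s t assume st: "s \<in> S" "t \<in> S" "\<psi> s = \<psi> t"
    have "\<phi> s x = \<phi> t x" for x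
      using fun_cong[OF st(3), of x] range st(1,2) by (cases "x < m") (auto simp: \<psi>_def)
    then show "s = t"
      using inj st by (auto dest: inj_onD)
  qed
  moreover have "\<forall>s\<in>S. \<forall>x. (x < m \<longrightarrow> (\<forall>y. \<psi> s x = Some y \<longrightarrow> y < m)) \<and> (m \<le> x \<longrightarrow> \<psi> s x = None)"
    using range by (auto simp: \<psi>_def)
  moreover have "\<forall>s\<in>S. \<forall>t\<in>S. \<psi> (mul s t) = (\<lambda>x. Option.bind (\<psi> s x) (\<psi> t))"
    using range mult by (auto simp: \<psi>_def)
  ultimately show ?thesis
    unfolding partial_faithful_action_def by blast
qed

section \<open>From permutation representations to total actions\<close>

locale rees_construction = group G + faithful_action G E \<phi>
  for G :: "('a, 'm) monoid_scheme" (structure) and E :: "'b set" and \<phi> +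
  fixes g
  assumes finite_E: "finite E" and g: "g \<in> carrier G" "g \<noteq> \<one>"
begin

abbreviation C :: "nat \<Rightarrow> nat \<Rightarrow> 'a" where
  "C \<equiv> sandwich_C G g"

definition ract :: "'b \<Rightarrow> 'a \<Rightarrow> 'b" where
  "ract y h = \<phi> (inv h) y"

definition points :: "('b \<times> nat) set" where
  "points = E \<times> {1} \<union> (E - invariants E \<phi> g) \<times> {2}"

\<comment> \<open>Since \<open>C j k \<in> {\<one>, g}\<close>, the points \<open>(z, 1)\<close> and \<open>(z, 2)\<close> have the same image under every
  element once \<open>z\<close> is fixed by \<open>g\<close> (\<open>ract_sandwich_fixed\<close>), so identifying them is consistent.\<close>
definition normalize :: "'b \<Rightarrow> nat \<Rightarrow> 'b \<times> nat" where
  "normalize z l = (z, if l = 2 \<and> \<phi> g z = z then 1 else l)"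

definition rees_act :: "nat \<times> 'a \<times> nat \<Rightarrow> 'b \<times> nat \<Rightarrow> 'b \<times> nat" where
  "rees_act s p =
     (case s of (k, h, l) \<Rightarrow> case p of (y, j) \<Rightarrow> normalize (ract y (C j k \<otimes> h)) l)"

lemma C_closed: "C j k \<in> carrier G"
  using g is_monoid by (simp add: sandwich_C_def)

lemma ract_closed: "y \<in> E \<Longrightarrow> h \<in> carrier G \<Longrightarrow> ract y h \<in> E"
  by (simp add: ract_def action_closed inv_closed)

lemma ract_mult:
  assumes "y \<in> E" "a \<in> carrier G" "b \<in> carrier G"
  shows "ract y (a \<otimes> b) = ract (ract y a) b"
  using assms by (simp add: ract_def inv_mult_group composition_rule inv_closed)

lemma ract_inv_cancel:
  assumes "y \<in> E" "h \<in> carrier G"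
  shows "ract (\<phi> h y) h = y"
proof -
  have "\<phi> (inv h) (\<phi> h y) = \<phi> (inv h \<otimes> h) y"
    using assms by (intro composition_rule[symmetric]) auto
  then show ?thesis
    using assms by (simp add: ract_def l_inv action_one)
qed

lemma ract_one: "y \<in> E \<Longrightarrow> ract y \<one> = y"
  by (simp add: ract_def action_one inv_one)

lemma action_ract_cancel:
  assumes "y \<in> E" "h \<in> carrier G"
  shows "\<phi> h (ract y h) = y"
proof -
  have "\<phi> h (ract y h) = \<phi> (h \<otimes> inv h) y"
    unfolding ract_def using assms by (intro composition_rule[symmetric]) auto
  then show ?thesis
    using assms by (simp add: action_one)
qed

lemma ract_g_iff_fixed:
  assumes "y \<in> E"
  shows "ract y g = y \<longleftrightarrow> \<phi> g y = y"
  using ract_inv_cancel[OF assms g(1)] action_ract_cancel[OF assms g(1)] by metis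

lemma ract_sandwich_fixed:
  assumes "z \<in> E" "\<phi> g z = z" "h \<in> carrier G"
  shows "ract z (C j k \<otimes> h) = ract z h"
proof -
  have "ract z (C j k) = z"
    using assms ract_g_iff_fixed ract_one by (simp add: sandwich_C_def)
  then show ?thesis
    using assms C_closed by (simp add: ract_mult)
qed

lemma card_points: "card points = 2 * card E - card (invariants E \<phi> g)"
proof -
  have "invariants E \<phi> g \<subseteq> E"
    by (auto simp: invariants_def)
  moreover have "card points = card (E \<times> {1::nat}) + card ((E - invariants E \<phi> g) \<times> {2::nat})"
    unfolding points_def by (rule card_Un_disjoint) (auto simp: finite_E)
  ultimately show ?thesis
    using finite_E card_mono[OF finite_E]
    by (simp add: card_cartesian_product card_Diff_subset finite_subset)
qed

lemma finite_points: "finite points"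
  by (simp add: points_def finite_E)

lemma normalize_in_points: "z \<in> E \<Longrightarrow> l \<in> {1, 2} \<Longrightarrow> normalize z l \<in> points"
  by (auto simp: normalize_def points_def invariants_def)

lemma rees_act_closed:
  assumes "s \<in> rees_carrier G" "p \<in> points"
  shows "rees_act s p \<in> points"
proof -
  obtain k h l where "s = (k, h, l)" "h \<in> carrier G" "l \<in> {1, 2}"
    using assms(1) by (auto simp: rees_carrier_def)
  moreover obtain y j where "p = (y, j)" "y \<in> E"
    using assms(2) by (auto simp: points_def)
  ultimately show ?thesis
    using C_closed by (simp add: rees_act_def normalize_in_points ract_closed)
qed

lemma rees_act_mult:
  assumes s: "s \<in> rees_carrier G" and t: "t \<in> rees_carrier G" and p: "p \<in> points"
  shows "rees_act (rees_mult G C s t) p = rees_act t (rees_act s p)"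
proof -
  obtain k h l k' h' l' where st: "s = (k, h, l)" "t = (k', h', l')"
    and h: "h \<in> carrier G" "h' \<in> carrier G"
    using s t by (auto simp: rees_carrier_def)
  obtain y j where yj: "p = (y, j)" "y \<in> E"
    using p by (auto simp: points_def)
  define z where "z = ract y (C j k \<otimes> h)"
  have z: "z \<in> E"
    using yj h C_closed by (simp add: z_def ract_closed m_closed)
  have "ract y (C j k \<otimes> (h \<otimes> C l k' \<otimes> h')) = ract z (C l k' \<otimes> h')"
    using yj h C_closed by (simp add: z_def ract_mult ract_closed m_assoc)
  also have "\<dots> = ract z (C (snd (normalize z l)) k' \<otimes> h')"
    using z h ract_sandwich_fixed by (simp add: normalize_def)
  finally show ?thesis
    by (simp add: st yj rees_act_def rees_mult_def z_def normalize_def)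
qed

lemma ex_moved_point: "\<exists>w\<in>E. \<phi> g w \<noteq> w"
proof (rule ccontr)
  assume "\<not> (\<exists>w\<in>E. \<phi> g w \<noteq> w)"
  then have "g = \<one>"
    using g by (intro faithful_eqI) (auto simp: action_one)
  then show False
    using g by simp
qed

lemma ract_inj:
  assumes "x \<in> E" "y \<in> E" "h \<in> carrier G" "ract x h = ract y h"
  shows "x = y"
  using assms action_ract_cancel by metis

lemma fst_rees_act: "fst (rees_act (k, h, l) (y, j)) = ract y (C j k \<otimes> h)"
  by (simp add: rees_act_def normalize_def)

lemma snd_rees_act: "snd (rees_act (k, h, l) p) \<in> {1, l}"
  by (auto simp: rees_act_def normalize_def split: prod.split)

lemma snd_rees_act_moved:
  assumes "w \<in> E" "\<phi> g w \<noteq> w" "h \<in> carrier G"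
  shows "snd (rees_act (k, h, l) (\<phi> h w, 1)) = l"
  using assms ract_inv_cancel by (simp add: rees_act_def normalize_def sandwich_C_def)

lemma ract_sandwich_column_inj:
  assumes "ract w (C 2 k \<otimes> h) = ract w (C 2 k' \<otimes> h)"
    and "w \<in> E" "\<phi> g w \<noteq> w" "h \<in> carrier G" "k \<in> {1, 2}" "k' \<in> {1, 2}"
  shows "k = k'"
proof (rule ccontr)
  assume "k \<noteq> k'"
  then have "ract w (g \<otimes> h) = ract w (\<one> \<otimes> h)"
    using assms by (cases "k = 2") (auto simp: sandwich_C_def)
  then have "ract (ract w g) h = ract w h"
    using assms g by (simp add: ract_mult)
  then have "ract w g = w"
    using ract_inj[OF ract_closed[OF assms(2) g(1)] assms(2,4)] by blast
  then show False
    using assms(2,3) ract_g_iff_fixed by blast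
qed

lemma rees_act_faithful:
  assumes s: "s \<in> rees_carrier G" and t: "t \<in> rees_carrier G"
    and agree: "\<And>p. p \<in> points \<Longrightarrow> rees_act s p = rees_act t p"
  shows "s = t"
proof -
  obtain k h l k' h' l' where st: "s = (k, h, l)" "t = (k', h', l')"
    and h: "h \<in> carrier G" "h' \<in> carrier G" and l: "l \<in> {1, 2}" "l' \<in> {1, 2}"
    and k: "k \<in> {1, 2}" "k' \<in> {1, 2}"
    using s t by (auto simp: rees_carrier_def)
  obtain w where w: "w \<in> E" "\<phi> g w \<noteq> w"
    using ex_moved_point by blast
  have point1: "(y, 1) \<in> points" if "y \<in> E" for y
    using that by (simp add: points_def)
  \<comment> \<open>\<open>s\<close> moves \<open>(\<phi> h w, 1)\<close> to row \<open>l\<close>, and any element moves points to row \<open>1\<close> or to its own row\<close>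
  have "l = 2 \<longleftrightarrow> l' = 2"
    using agree[OF point1[OF action_closed[OF h(1) w(1)]]]
      agree[OF point1[OF action_closed[OF h(2) w(1)]]]
      snd_rees_act_moved[OF w h(1)] snd_rees_act_moved[OF w h(2)]
      snd_rees_act[of k h l] snd_rees_act[of k' h' l']
    by (metis insert_iff singletonD st)
  then have "l = l'"
    using l by auto
  have "ract y h = ract y h'" if "y \<in> E" for y
    using agree[OF point1[OF that]] fst_rees_act[of k h l y 1] fst_rees_act[of k' h' l' y 1] h
    by (simp add: st sandwich_C_def)
  then have "inv h = inv h'"
    using h by (intro faithful_eqI) (auto simp: ract_def)
  then have "h = h'"
    using h by (metis inv_inv)
  have "(w, 2) \<in> points"
    using w by (simp add: points_def invariants_def)
  then have "ract w (C 2 k \<otimes> h) = ract w (C 2 k' \<otimes> h)"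
    using agree fst_rees_act[of k h l w 2] fst_rees_act[of k' h' l' w 2] \<open>h = h'\<close>
    by (simp add: st)
  then have "k = k'"
    using ract_sandwich_column_inj w h(1) k by blast
  show ?thesis
    using st \<open>l = l'\<close> \<open>h = h'\<close> \<open>k = k'\<close> by simp
qed

lemma total_faithful_action_rees:
  "total_faithful_action (rees_carrier G) (rees_mult G C) (2 * card E - card (invariants E \<phi> g))"
  unfolding card_points[symmetric]
  using finite_points rees_act_closed rees_act_mult rees_act_faithful
  by (rule total_faithful_action_card)

end

lemma total_faithful_action_of_perm_rep:
  assumes "group G" "g \<in> carrier G" "g \<noteq> \<one>\<^bsub>G\<^esub>" "faithful_perm_rep G n \<rho>"
  shows "total_faithful_action (rees_carrier G) (rees_mult G (sandwich_C G g))
           (2 * n - card (Fix_perm n (\<rho> g)))"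
proof -
  have "faithful_action G {..<n} \<rho>"
    using assms(1,4) faithful_perm_rep_iff_faithful_action by blast
  then interpret rees_construction G "{..<n}" \<rho> g
    using assms by (simp add: rees_construction_def rees_construction_axioms_def)
  show ?thesis
    using total_faithful_action_rees by (simp add: Fix_perm_eq_invariants)
qed

section \<open>From partial actions to permutation representations\<close>

locale rees_partial_action = group G for G :: "('a, 'm) monoid_scheme" (structure) +
  fixes g :: 'a and m :: nat and \<phi> :: "nat \<times> 'a \<times> nat \<Rightarrow> nat \<Rightarrow> nat option"
  assumes g: "g \<in> carrier G"
    and faithful: "inj_on \<phi> (rees_carrier G)"
    and bounded: "\<And>s x y. s \<in> rees_carrier G \<Longrightarrow> \<phi> s x = Some y \<Longrightarrow> y < m"
    and action_mult: "\<And>s t x. s \<in> rees_carrier G \<Longrightarrow> t \<in> rees_carrier G \<Longrightarrow>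
                 \<phi> (rees_mult G (sandwich_C G g) s t) x = Option.bind (\<phi> s x) (\<phi> t)"
begin

definition embed :: "'a \<Rightarrow> nat \<times> 'a \<times> nat" where
  "embed h = (1, h, 1)"

definition fixed_points :: "nat \<times> 'a \<times> nat \<Rightarrow> nat set" where
  "fixed_points s = {a. \<phi> s a = Some a}"

abbreviation A1 :: "nat set" where
  "A1 \<equiv> fixed_points (embed \<one>)"

abbreviation A2 :: "nat set" where
  "A2 \<equiv> fixed_points (1, \<one>, 2)"

lemma embed_in_carrier: "h \<in> carrier G \<Longrightarrow> embed h \<in> rees_carrier G"
  by (simp add: embed_def rees_carrier_def)

lemma mult_embed:
  "a \<in> carrier G \<Longrightarrow> b \<in> carrier G \<Longrightarrow> \<phi> (embed (a \<otimes> b)) x = Option.bind (\<phi> (embed a) x) (\<phi> (embed b))"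
  using action_mult[OF embed_in_carrier embed_in_carrier, of a b x]
  by (simp add: embed_def rees_mult_def sandwich_C_def)

lemma fixed_points_subset: "s \<in> rees_carrier G \<Longrightarrow> fixed_points s \<subseteq> {..<m}"
  unfolding fixed_points_def using bounded by blast

lemma finite_fixed_points: "s \<in> rees_carrier G \<Longrightarrow> finite (fixed_points s)"
  using fixed_points_subset finite_subset by blast

lemma image_in_A1:
  assumes "\<phi> (embed \<one>) x = Some b"
  shows "b \<in> A1"
  using mult_embed[of \<one> \<one> x] assms by (simp add: fixed_points_def)

lemma embed_maps_A1:
  assumes a: "a \<in> A1" and h: "h \<in> carrier G"
  obtains b where "\<phi> (embed h) a = Some b" "b \<in> A1"
proof -
  have "Some a = Option.bind (\<phi> (embed h) a) (\<phi> (embed (inv h)))"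
    using a h mult_embed[of h "inv h" a] by (simp add: fixed_points_def)
  then obtain b where b: "\<phi> (embed h) a = Some b"
    by (cases "\<phi> (embed h) a") auto
  moreover have "\<phi> (embed \<one>) b = Some b"
    using mult_embed[of h \<one> a] h b by simp
  ultimately show ?thesis
    using that by (simp add: fixed_points_def)
qed

definition gact :: "'a \<Rightarrow> nat \<Rightarrow> nat" where
  "gact h a = the (\<phi> (embed h) a)"

lemma embed_gact:
  assumes "a \<in> A1" "h \<in> carrier G"
  shows "\<phi> (embed h) a = Some (gact h a)"
  using embed_maps_A1[OF assms] by (metis gact_def option.sel)

lemma gact_closed:
  assumes "a \<in> A1" "h \<in> carrier G"
  shows "gact h a \<in> A1"
  using embed_maps_A1[OF assms] by (metis gact_def option.sel)

lemma gact_mult: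
  assumes "a \<in> A1" "h \<in> carrier G" "k \<in> carrier G"
  shows "gact (h \<otimes> k) a = gact k (gact h a)"
  using mult_embed[of h k a] embed_gact[OF assms(1,2)]
    embed_gact[OF gact_closed[OF assms(1,2)] assms(3)] embed_gact[OF assms(1) m_closed[OF assms(2,3)]]
    assms
  by simp

lemma gact_one: "a \<in> A1 \<Longrightarrow> gact \<one> a = a"
  using embed_gact[of a \<one>] by (simp add: fixed_points_def)

lemma gact_faithful:
  assumes hk: "h \<in> carrier G" "k \<in> carrier G" and agree: "\<And>a. a \<in> A1 \<Longrightarrow> gact h a = gact k a"
  shows "h = k"
proof -
  have "\<phi> (embed h) = \<phi> (embed k)"
  proof
    fix x show "\<phi> (embed h) x = \<phi> (embed k) x"
  proof (cases "\<phi> (embed \<one>) x")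
    case None
    then show ?thesis
      using mult_embed[of \<one> h x] mult_embed[of \<one> k x] hk by simp
  next
    case (Some b)
    then have "b \<in> A1"
      by (rule image_in_A1)
    then show ?thesis
      using Some mult_embed[of \<one> h x] mult_embed[of \<one> k x] hk embed_gact agree by simp
  qed
  qed
  then have "embed h = embed k"
    using faithful hk embed_in_carrier by (auto dest: inj_onD)
  then show ?thesis
    by (simp add: embed_def)
qed

lemma faithful_action_A1: "faithful_action G A1 (\<lambda>h. restrict (gact (inv h)) A1)"
proof (rule faithful_action_restrict)
  show "h = k"
    if "h \<in> carrier G" "k \<in> carrier G" "\<And>a. a \<in> A1 \<Longrightarrow> gact (inv h) a = gact (inv k) a" for h k
    using that gact_faithful[of "inv h" "inv k"] inv_inv by fastforce
qed (simp_all add: is_group gact_closed gact_one gact_mult inv_mult_group)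


lemma card_A1_le_card_A2: "card A1 \<le> card A2"
proof -
  let ?e1 = "embed \<one>" and ?e2 = "(1::nat, \<one>, 2::nat)"
  have e: "?e1 \<in> rees_carrier G" "?e2 \<in> rees_carrier G"
    by (simp_all add: embed_def rees_carrier_def)
  have "\<exists>b. \<phi> ?e2 a = Some b \<and> \<phi> ?e1 b = Some a \<and> b \<in> A2" if a: "a \<in> A1" for a
  proof -
    have "Some a = Option.bind (\<phi> ?e2 a) (\<phi> ?e1)"
      using a action_mult[OF e(2) e(1), of a]
      by (simp add: fixed_points_def embed_def rees_mult_def sandwich_C_def)
    then obtain b where b: "\<phi> ?e2 a = Some b" "\<phi> ?e1 b = Some a"
      by (cases "\<phi> ?e2 a") auto
    moreover have "\<phi> ?e2 b = Some b"
      using b action_mult[OF e(2) e(2), of a] by (simp add: rees_mult_def sandwich_C_def)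
    ultimately show ?thesis
      by (simp add: fixed_points_def)
  qed
  then obtain f where f: "\<And>a. a \<in> A1 \<Longrightarrow> \<phi> ?e2 a = Some (f a) \<and> \<phi> ?e1 (f a) = Some a \<and> f a \<in> A2"
    by metis
  have "inj_on f A1"
    using f by (metis inj_onI option.inject)
  moreover have "f ` A1 \<subseteq> A2"
    using f by blast
  ultimately show ?thesis
    using finite_fixed_points[OF e(2)] by (rule card_inj_on_le)
qed

lemma A1_A2_fixed_by_g:
  assumes "a \<in> A1" "a \<in> A2"
  shows "gact g a = a"
proof -
  let ?e1 = "embed \<one>" and ?e2 = "(1::nat, \<one>, 2::nat)" and ?t = "(2::nat, \<one>, 1::nat)"
  have e: "?e1 \<in> rees_carrier G" "?e2 \<in> rees_carrier G" "?t \<in> rees_carrier G"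
    by (simp_all add: embed_def rees_carrier_def)
  have "\<phi> (embed g) a = \<phi> ?t a"
    using action_mult[OF e(2) e(3), of a] assms(2) g
    by (simp add: fixed_points_def embed_def rees_mult_def sandwich_C_def)
  also have "\<dots> = Some a"
    using action_mult[OF e(1) e(3), of a] assms(1)
    by (simp add: fixed_points_def embed_def rees_mult_def sandwich_C_def)
  finally show ?thesis
    using embed_gact[OF assms(1) g] by simp
qed

lemma ex_perm_rep_bounded: "\<exists>n \<rho>. faithful_perm_rep G n \<rho> \<and> 2 * n - card (Fix_perm n (\<rho> g)) \<le> m"
proof -
  interpret A1: faithful_action G A1 "\<lambda>h. restrict (gact (inv h)) A1"
    by (rule faithful_action_A1)
  have e: "embed \<one> \<in> rees_carrier G" "(1::nat, \<one>, 2::nat) \<in> rees_carrier G"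
    by (simp_all add: embed_def rees_carrier_def)
  obtain \<rho> where \<rho>: "faithful_perm_rep G (card A1) \<rho>"
    and Fix: "card (Fix_perm (card A1) (\<rho> g)) =
              card (invariants A1 (\<lambda>h. restrict (gact (inv h)) A1) g)"
    using A1.obtain_faithful_perm_rep finite_fixed_points[OF e(1)] g by blast
  have "A1 \<inter> A2 \<subseteq> invariants A1 (\<lambda>h. restrict (gact (inv h)) A1) g"
  proof
    fix a assume a: "a \<in> A1 \<inter> A2"
    then have "gact (inv g) a = gact (inv g) (gact g a)"
      using A1_A2_fixed_by_g by simp
    also have "\<dots> = a"
      using a g gact_mult[of a g "inv g"] by (simp add: gact_one)
    finally show "a \<in> invariants A1 (\<lambda>h. restrict (gact (inv h)) A1) g"
      using a by (simp add: invariants_def)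
  qed
  moreover have "finite (invariants A1 (\<lambda>h. restrict (gact (inv h)) A1) g)"
    by (rule finite_subset[OF _ finite_fixed_points[OF e(1)]]) (auto simp: invariants_def)
  ultimately have "card (A1 \<inter> A2) \<le> card (Fix_perm (card A1) (\<rho> g))"
    unfolding Fix by (simp add: card_mono)
  moreover have "card (A1 \<union> A2) \<le> m"
    using fixed_points_subset[OF e(1)] fixed_points_subset[OF e(2)] card_mono[of "{..<m}" "A1 \<union> A2"]
    by auto
  moreover have "card (A1 \<union> A2) + card (A1 \<inter> A2) = card A1 + card A2"
    using card_Un_Int[OF finite_fixed_points[OF e(1)] finite_fixed_points[OF e(2)]] by simp
  ultimately have "2 * card A1 - card (Fix_perm (card A1) (\<rho> g)) \<le> m"
    using card_A1_le_card_A2 by linarith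
  then show ?thesis
    using \<rho> by blast
qed

end

lemma ex_perm_rep_bounded_by_partial_degree:
  assumes "group G" "g \<in> carrier G"
    and "partial_faithful_action (rees_carrier G) (rees_mult G (sandwich_C G g)) m"
  shows "\<exists>n \<rho>. faithful_perm_rep G n \<rho> \<and> 2 * n - card (Fix_perm n (\<rho> g)) \<le> m"
proof -
  obtain \<phi> where "inj_on \<phi> (rees_carrier G)"
    and bounded: "\<forall>s\<in>rees_carrier G. \<forall>x. (x < m \<longrightarrow> (\<forall>y. \<phi> s x = Some y \<longrightarrow> y < m)) \<and>
                                       (m \<le> x \<longrightarrow> \<phi> s x = None)"
    and "\<forall>s\<in>rees_carrier G. \<forall>t\<in>rees_carrier G.
           \<phi> (rees_mult G (sandwich_C G g) s t) = (\<lambda>x. Option.bind (\<phi> s x) (\<phi> t))"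
    using assms(3) unfolding partial_faithful_action_def by blast
  moreover have "y < m" if "s \<in> rees_carrier G" "\<phi> s x = Some y" for s x y
    using bounded that by (cases "x < m") auto
  ultimately interpret rees_partial_action G g m \<phi>
    using assms by (simp add: rees_partial_action_def rees_partial_action_axioms_def)
  show ?thesis
    by (rule ex_perm_rep_bounded)
qed

theorem corollary2p17:
  fixes G :: "('g, 'b) monoid_scheme" and g :: 'g
  assumes "group G" and "finite (carrier G)" and "carrier G \<noteq> {\<one>\<^bsub>G\<^esub>}"
    and "g \<in> carrier G" and "g \<noteq> \<one>\<^bsub>G\<^esub>"
  defines "S \<equiv> rees_carrier G" and "mul \<equiv> rees_mult G (sandwich_C G g)"
  shows "min_partial_degree S mul =
           (LEAST k. \<exists>n \<rho>. faithful_perm_rep G n \<rho> \<and> k = 2 * n - card (Fix_perm n (\<rho> g))) \<and>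
         min_total_degree S mul =
           (LEAST k. \<exists>n \<rho>. faithful_perm_rep G n \<rho> \<and> k = 2 * n - card (Fix_perm n (\<rho> g))) \<and>
         (LEAST k. \<exists>n \<rho>. faithful_perm_rep G n \<rho> \<and> k = 2 * n - card (Fix_perm n (\<rho> g))) =
         (LEAST k. \<exists>n \<rho>. faithful_perm_rep G n \<rho> \<and> no_iso_orbits G n \<rho> \<and>
                          k = 2 * n - card (Fix_perm n (\<rho> g)))"
proof -
  let ?K = "LEAST k. \<exists>n \<rho>. faithful_perm_rep G n \<rho> \<and> k = 2 * n - card (Fix_perm n (\<rho> g))"
  obtain n \<rho> where \<rho>: "faithful_perm_rep G n \<rho>" and K: "?K = 2 * n - card (Fix_perm n (\<rho> g))"
    using LeastI_ex[of "\<lambda>k. \<exists>n \<rho>. faithful_perm_rep G n \<rho> \<and> k = 2 * n - card (Fix_perm n (\<rho> g))"]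
      ex_faithful_perm_rep[OF assms(1,2)] by blast
  have K_le: "?K \<le> 2 * n' - card (Fix_perm n' (\<rho>' g))" if "faithful_perm_rep G n' \<rho>'" for n' \<rho>'
    using that by (intro Least_le) blast
  have total: "total_faithful_action S mul ?K"
    unfolding K S_def mul_def using assms(1,4,5) \<rho> by (rule total_faithful_action_of_perm_rep)
  have lower: "?K \<le> m" if "partial_faithful_action S mul m" for m
    using ex_perm_rep_bounded_by_partial_degree[OF assms(1,4)] that K_le
    unfolding S_def mul_def by (meson order_trans)
  obtain n' \<rho>' where \<rho>': "faithful_perm_rep G n' \<rho>'" "no_iso_orbits G n' \<rho>'"
    and "2 * n' - card (Fix_perm n' (\<rho>' g)) \<le> ?K"
    using faithful_perm_rep_without_iso_orbits[OF assms(1,4) \<rho>] K by auto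
  then have "?K = 2 * n' - card (Fix_perm n' (\<rho>' g))"
    using K_le by (meson antisym)
  then have "(LEAST k. \<exists>n \<rho>. faithful_perm_rep G n \<rho> \<and> no_iso_orbits G n \<rho> \<and>
                          k = 2 * n - card (Fix_perm n (\<rho> g))) = ?K"
    using \<rho>' K_le by (intro Least_equality) blast+
  moreover have "min_partial_degree S mul = ?K"
    unfolding min_partial_degree_def
    using total lower by (intro Least_equality) (auto intro: partial_faithful_action_if_total)
  moreover have "min_total_degree S mul = ?K"
    unfolding min_total_degree_def
    using total lower by (intro Least_equality) (auto intro: partial_faithful_action_if_total)
  ultimately show ?thesis
    by simp
qed

end
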